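(* For all integers $t,s\ge 0$ and $r\ge 1$, $$\max_{\mathbf{u}\in\mathbb{Z}_+^r}\bigl|\mathcal{A}_{t,s}(\mathbf{u})\bigr| = A_{t,s}(r).$$ Consequently, for any $q\ge2$, $\max_{\mathbf{x}\in J_r^*}|\mathcal{B}_{t,s}(\mathbf{x})|=A_{t,s}(r)$.
   Context: For $\mathbf{u}=(u_1,\dots,u_r)\in\mathbb{Z}_+^r$ (positive integers), the asymmetric error ball is $\mathcal{A}_{t,s}(\mathbf{u})=\{\mathbf{v}\in\mathbb{Z}_+^r:\ \sum_{i=1}^r\max\{0,u_i-v_i\}\le s,\ \sum_{i=1}^r\max\{0,v_i-u_i\}\le t\}$. The numbers $A_{t,s}(r)$ (integers $t,s$, $r\ge1$) are defined by: $A_{t,s}(r)=0$ if $t<0$ or $s<0$; $A_{t,s}(1)=t+s+1$ for $t,s\ge0$; for $r\ge2$, $t,s\ge0$: $A_{t,s}(r)=\sum_{i=1}^{t}A_{t-i,s}(r-1)+\sum_{i=1}^{s}A_{t,s-i}(r-1)+A_{t,s}(r-1)$. For the consequence: $J_r^*$ is the set of strings over $\Sigma_q=\{0,\dots,q-1\}$ with exactly $r$ runs; writing $\mathbf{x}=c_1^{u_1}\cdots c_r^{u_r}$ ($c_i\ne c_{i+1}$, $u_i\ge1$), the sticky-insdel ball $\mathcal{B}_{t,s}(\mathbf{x})$ is the set of strings $c_1^{v_1}\cdots c_r^{v_r}$ with $(v_1,\dots,v_r)\in\mathcal{A}_{t,s}(u_1,\dots,u_r)$ (i.e. strings obtainable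 by at most $t$ sticky insertions and at most $s$ sticky deletions). *)

theory Defs
  imports Main
begin

definition pos_vec :: "nat \<Rightarrow> nat list \<Rightarrow> bool" where
  "pos_vec r u \<longleftrightarrow> length u = r \<and> (\<forall>x\<in>set u. x \<ge> 1)"

definition asym_ball :: "nat \<Rightarrow> nat \<Rightarrow> nat list \<Rightarrow> nat list set" where
  "asym_ball t s u = {v. pos_vec (length u) v \<and>
      (\<Sum>i<length u. u ! i - v ! i) \<le> s \<and>
      (\<Sum>i<length u. v ! i - u ! i) \<le> t}"
  (* nat subtraction truncates: u!i - v!i = max 0 (u_i - v_i) *)

(* The numbers A_{t,s}(r) for t,s >= 0, r >= 1 (the value for r = 0 is irrelevant).
   Terms with negative t or s are 0 and hence omitted. *)
fun A_num :: "nat \<Rightarrow> nat \<Rightarrow> nat \<Rightarrow> nat" where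
  "A_num t s 0 = 0"
| "A_num t s (Suc 0) = t + s + 1"
| "A_num t s (Suc (Suc r)) =
     (\<Sum>i=1..t. A_num (t - i) s (Suc r)) + (\<Sum>i=1..s. A_num t (s - i) (Suc r)) + A_num t s (Suc r)"

definition runs_string :: "'a list \<Rightarrow> nat list \<Rightarrow> 'a list" where
  "runs_string cs us = concat (map (\<lambda>(c, n). replicate n c) (zip cs us))"

definition J_star :: "nat \<Rightarrow> nat \<Rightarrow> nat list set" where
  "J_star q r = {x. set x \<subseteq> {0..<q} \<and> length (remdups_adj x) = r}"

definition sticky_ball :: "nat \<Rightarrow> nat \<Rightarrow> nat list \<Rightarrow> nat list set" where
  "sticky_ball t s x = {runs_string cs vs | cs us vs.
      runs_string cs us = x \<and> length cs = length us \<and> pos_vec (length cs) us \<and>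
      (\<forall>i. Suc i < length cs \<longrightarrow> cs ! i \<noteq> cs ! Suc i) \<and>
      vs \<in> asym_ball t s us}"

end

theory Submission
  imports Defs
begin

(* Splitting the asymmetric ball by its first coordinate, which is raised by some i \<le> t, kept,
   or lowered by some i \<le> s, reproduces the recursion defining A_{t,s}(r), except that a lowering
   by i is only possible while u_1 - i \<ge> 1. Hence |A_{t,s}(u)| \<le> A_{t,s}(r), with equality as soon
   as every u_i exceeds s, e.g. for u = (s+1,...,s+1).
   A string with r runs is determined by its run symbols c_1...c_r together with its run lengths,
   so the sticky ball of c_1^{u_1}...c_r^{u_r} is a bijective image of A_{t,s}(u); for q \<ge> 2 the
   alternating string 0^{s+1} 1^{s+1} 0^{s+1} ... has r runs and attains the maximum. *)

lemma asym_ball_Nil [simp]: "asym_ball t s [] = {[]}"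
  by (auto simp: asym_ball_def pos_vec_def)

lemma Cons_in_asym_ball_iff:
  "b # w \<in> asym_ball t s (a # u) \<longleftrightarrow>
     1 \<le> b \<and> a - b \<le> s \<and> b - a \<le> t \<and> w \<in> asym_ball (t - (b - a)) (s - (a - b)) u"
  by (auto simp: asym_ball_def pos_vec_def sum.lessThan_Suc_shift simp del: sum.lessThan_Suc)

lemma asym_ball_Cons_memE:
  assumes "v \<in> asym_ball t s (a # u)"
  obtains b w where "v = b # w"
  using assms by (cases v) (auto simp: asym_ball_def pos_vec_def)

lemma finite_asym_ball: "finite (asym_ball t s u)"
proof (induction u arbitrary: t s)
  case (Cons a u)
  have "asym_ball t s (a # u) \<subseteq>
      (\<Union>b\<le>a + t. \<Union>t'\<le>t. \<Union>s'\<le>s. Cons b ` asym_ball t' s' u)"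
  proof
    fix v assume v: "v \<in> asym_ball t s (a # u)"
    then obtain b w where "v = b # w" by (rule asym_ball_Cons_memE)
    with v show "v \<in> (\<Union>b\<le>a + t. \<Union>t'\<le>t. \<Union>s'\<le>s. Cons b ` asym_ball t' s' u)"
      by (fastforce simp: Cons_in_asym_ball_iff)
  qed
  then show ?case
    by (rule finite_subset) (simp add: Cons.IH)
qed simp

(* The bound min s (a - 1) on the lowering keeps the first coordinate positive. *)
lemma asym_ball_Cons:
  assumes "1 \<le> a"
  shows "asym_ball t s (a # u) =
     (\<Union>i\<in>{1..t}. Cons (a + i) ` asym_ball (t - i) s u) \<union> Cons a ` asym_ball t s u \<union>
     (\<Union>i\<in>{1..min s (a - 1)}. Cons (a - i) ` asym_ball t (s - i) u)"
    (is "_ = ?R")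
proof
  show "asym_ball t s (a # u) \<subseteq> ?R"
  proof
    fix v assume v: "v \<in> asym_ball t s (a # u)"
    then obtain b w where vbw: "v = b # w" by (rule asym_ball_Cons_memE)
    consider "a < b" | "b = a" | "b < a" by linarith
    then show "v \<in> ?R"
    proof cases
      case 1
      then have "b - a \<in> {1..t}" "w \<in> asym_ball (t - (b - a)) s u" "v = (a + (b - a)) # w"
        using v vbw by (auto simp: Cons_in_asym_ball_iff)
      then show ?thesis by blast
    next
      case 2
      then show ?thesis using v vbw by (auto simp: Cons_in_asym_ball_iff)
    next
      case 3
      then have "a - b \<in> {1..min s (a - 1)}" "w \<in> asym_ball t (s - (a - b)) u"
          "v = (a - (a - b)) # w"
        using v vbw by (auto simp: Cons_in_asym_ball_iff)
      then show ?thesis by blast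
    qed
  qed
  show "?R \<subseteq> asym_ball t s (a # u)"
    using assms by (auto simp: Cons_in_asym_ball_iff)
qed

lemma card_UN_Cons_image:
  assumes "finite I" "inj_on f I" "\<And>i. i \<in> I \<Longrightarrow> finite (S i)"
  shows "card (\<Union>i\<in>I. Cons (f i) ` S i) = (\<Sum>i\<in>I. card (S i))"
proof -
  have "card (\<Union>i\<in>I. Cons (f i) ` S i) = (\<Sum>i\<in>I. card (Cons (f i) ` S i))"
    using assms by (intro card_UN_disjoint) (auto simp: inj_on_def)
  also have "\<dots> = (\<Sum>i\<in>I. card (S i))"
    by (intro sum.cong refl card_image) simp
  finally show ?thesis .
qed

lemma card_asym_ball_Cons:
  assumes "1 \<le> a"
  shows "card (asym_ball t s (a # u)) =
     (\<Sum>i=1..t. card (asym_ball (t - i) s u)) + card (asym_ball t s u) +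
     (\<Sum>i=1..min s (a - 1). card (asym_ball t (s - i) u))"
proof -
  have "card (asym_ball t s (a # u)) =
      card (\<Union>i\<in>{1..t}. Cons (a + i) ` asym_ball (t - i) s u) + card (Cons a ` asym_ball t s u) +
      card (\<Union>i\<in>{1..min s (a - 1)}. Cons (a - i) ` asym_ball t (s - i) u)"
    unfolding asym_ball_Cons[OF assms]
    by (subst card_Un_disjoint; (subst card_Un_disjoint)?) (auto simp: finite_asym_ball)
  also have "\<dots> = (\<Sum>i=1..t. card (asym_ball (t - i) s u)) + card (asym_ball t s u) +
      (\<Sum>i=1..min s (a - 1). card (asym_ball t (s - i) u))"
    by (subst (1 2) card_UN_Cons_image) (auto simp: finite_asym_ball inj_on_def card_image)
  finally show ?thesis .
qed

(* A_num with the value A_{t,s}(0) = 1 = |A_{t,s}([])|, so that the recursion holds from r = 0 on. *)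
fun A_ext :: "nat \<Rightarrow> nat \<Rightarrow> nat \<Rightarrow> nat" where
  "A_ext t s 0 = 1"
| "A_ext t s (Suc r) = (\<Sum>i=1..t. A_ext (t - i) s r) + (\<Sum>i=1..s. A_ext t (s - i) r) + A_ext t s r"

lemma A_num_eq_A_ext: "1 \<le> r \<Longrightarrow> A_num t s r = A_ext t s r"
proof (induction r arbitrary: t s rule: nat_induct_at_least)
  case (Suc r)
  then show ?case by (cases r) simp_all
qed simp

lemma card_asym_ball_le:
  "\<forall>x\<in>set u. 1 \<le> x \<Longrightarrow> card (asym_ball t s u) \<le> A_ext t s (length u)"
proof (induction u arbitrary: t s)
  case (Cons a u)
  have "(\<Sum>i=1..min s (a - 1). card (asym_ball t (s - i) u)) \<le> (\<Sum>i=1..s. card (asym_ball t (s - i) u))"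
    by (intro sum_mono2) auto
  also have "\<dots> \<le> (\<Sum>i=1..s. A_ext t (s - i) (length u))"
    using Cons by (intro sum_mono) simp
  finally have "card (asym_ball t s (a # u)) \<le>
      (\<Sum>i=1..t. card (asym_ball (t - i) s u)) + card (asym_ball t s u) +
      (\<Sum>i=1..s. A_ext t (s - i) (length u))"
    using Cons.prems by (simp add: card_asym_ball_Cons)
  moreover have "(\<Sum>i=1..t. card (asym_ball (t - i) s u)) \<le> (\<Sum>i=1..t. A_ext (t - i) s (length u))"
    using Cons by (intro sum_mono) simp
  moreover have "card (asym_ball t s u) \<le> A_ext t s (length u)"
    using Cons by simp
  ultimately show ?case by simp
qed simp

lemma card_asym_ball_eq:
  "\<forall>x\<in>set u. s < x \<Longrightarrow> card (asym_ball t s u) = A_ext t s (length u)"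
proof (induction u arbitrary: t s)
  case (Cons a u)
  then have "min s (a - 1) = s" by auto
  moreover have "card (asym_ball t' s' u) = A_ext t' s' (length u)" if "s' \<le> s" for t' s'
  proof -
    have "\<forall>x\<in>set u. s' < x" using Cons.prems that by auto
    then show ?thesis by (rule Cons.IH)
  qed
  ultimately show ?case
    using Cons.prems by (simp add: card_asym_ball_Cons)
qed simp

lemma runs_string_Nil [simp]: "runs_string [] us = []"
  by (simp add: runs_string_def)

lemma runs_string_Cons [simp]: "runs_string (c # cs) (u # us) = replicate u c @ runs_string cs us"
  by (simp add: runs_string_def)

lemma set_runs_string_subset: "set (runs_string cs us) \<subseteq> set cs"
  by (auto simp: runs_string_def dest: set_zip_leftD)

lemma hd_runs_string:
  assumes "cs \<noteq> []" "length cs = length us" "\<forall>x\<in>set us. 1 \<le> x"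
  shows "runs_string cs us \<noteq> [] \<and> hd (runs_string cs us) = hd cs"
proof -
  obtain c cs' u us' where "cs = c # cs'" "us = u # us'"
    using assms(1,2) by (cases cs; cases us) auto
  then show ?thesis using assms(3) by (cases u) auto
qed

lemma remdups_adj_runs_string:
  assumes "distinct_adj cs" "length cs = length us" "\<forall>x\<in>set us. 1 \<le> x"
  shows "remdups_adj (runs_string cs us) = cs"
  using assms
proof (induction cs us rule: list_induct2')
  case (4 c cs u us)
  have "remdups_adj (replicate u c @ runs_string cs us) =
      remdups_adj (replicate u c) @ remdups_adj (runs_string cs us)"
  proof (rule remdups_adj_append')
    show "replicate u c = [] \<or> runs_string cs us = [] \<or>
        last (replicate u c) \<noteq> hd (runs_string cs us)"
      using 4 hd_runs_string[of cs us] by (cases cs) auto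
  qed
  then show ?case
    using 4 by (auto simp: remdups_adj_replicate distinct_adj_ConsD)
qed auto

lemma runs_string_inj_on:
  assumes "distinct_adj cs"
  shows "inj_on (runs_string cs) {us. length us = length cs \<and> (\<forall>x\<in>set us. 1 \<le> x)}"
proof
  fix us vs
  assume "us \<in> {us. length us = length cs \<and> (\<forall>x\<in>set us. 1 \<le> x)}"
    "vs \<in> {us. length us = length cs \<and> (\<forall>x\<in>set us. 1 \<le> x)}"
    "runs_string cs us = runs_string cs vs"
  then show "us = vs"
    using assms
  proof (induction cs arbitrary: us vs)
    case (Cons c cs)
    obtain u us' v vs' where uv: "us = u # us'" "vs = v # vs'"
      using Cons.prems(1,2) by (cases us; cases vs) auto
    have first_run: "takeWhile (\<lambda>y. y = c) (runs_string (c # cs) (w # ws)) = replicate w c"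
      if "length ws = length cs" "\<forall>x\<in>set ws. 1 \<le> x" for w ws
    proof -
      have "takeWhile (\<lambda>y. y = c) (runs_string cs ws) = []"
        using hd_runs_string[of cs ws] that Cons.prems(4)
        by (cases cs) (auto simp: takeWhile_eq_Nil_iff)
      then show ?thesis by (induction w) auto
    qed
    have "replicate u c = replicate v c"
      using first_run[of us' u] first_run[of vs' v] Cons.prems(1-3) uv by simp
    then have "u = v" by simp
    moreover have "us' = vs'"
      using Cons.IH[of us' vs'] Cons.prems uv \<open>u = v\<close> by (auto dest: distinct_adj_ConsD)
    ultimately show ?case using uv by simp
  qed simp
qed

lemma sticky_ball_runs_string:
  assumes "distinct_adj cs" "length cs = length us" "\<forall>x\<in>set us. 1 \<le> x"
  shows "sticky_ball t s (runs_string cs us) = runs_string cs ` asym_ball t s us"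
proof
  show "sticky_ball t s (runs_string cs us) \<subseteq> runs_string cs ` asym_ball t s us"
  proof
    fix y assume "y \<in> sticky_ball t s (runs_string cs us)"
    then obtain cs' us' vs where y: "y = runs_string cs' vs" "vs \<in> asym_ball t s us'"
      and x: "runs_string cs' us' = runs_string cs us" "length cs' = length us'"
        "\<forall>x\<in>set us'. 1 \<le> x" "distinct_adj cs'"
      unfolding sticky_ball_def pos_vec_def distinct_adj_conv_nth by auto
    have "cs' = cs"
      using remdups_adj_runs_string[OF x(4,2,3)] remdups_adj_runs_string[OF assms] x(1) by simp
    moreover have "us' = us"
      using inj_onD[OF runs_string_inj_on[OF assms(1)], of us' us] x assms \<open>cs' = cs\<close> by simp
    ultimately show "y \<in> runs_string cs ` asym_ball t s us" using y by simp
  qed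
  show "runs_string cs ` asym_ball t s us \<subseteq> sticky_ball t s (runs_string cs us)"
    using assms unfolding sticky_ball_def pos_vec_def distinct_adj_conv_nth by fastforce
qed

lemma card_sticky_ball_runs_string:
  assumes "distinct_adj cs" "length cs = length us" "\<forall>x\<in>set us. 1 \<le> x"
  shows "card (sticky_ball t s (runs_string cs us)) = card (asym_ball t s us)"
proof -
  have "inj_on (runs_string cs) (asym_ball t s us)"
    by (rule inj_on_subset[OF runs_string_inj_on[OF assms(1)]])
      (auto simp: asym_ball_def pos_vec_def assms(2))
  then show ?thesis
    by (simp add: sticky_ball_runs_string[OF assms] card_image)
qed

(* A run decomposition of x is only available from a member of its sticky ball. *)
lemma card_sticky_ball_le: "card (sticky_ball t s x) \<le> A_ext t s (length (remdups_adj x))"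
proof (cases "sticky_ball t s x = {}")
  case False
  then obtain cs us where x: "x = runs_string cs us" "length cs = length us"
    "\<forall>x\<in>set us. 1 \<le> x" "distinct_adj cs"
    unfolding sticky_ball_def pos_vec_def distinct_adj_conv_nth by auto
  then have "card (sticky_ball t s x) = card (asym_ball t s us)"
    using card_sticky_ball_runs_string by blast
  also have "\<dots> \<le> A_ext t s (length us)"
    using x(3) by (rule card_asym_ball_le)
  finally show ?thesis
    using remdups_adj_runs_string[OF x(4,2,3)] x(1,2) by simp
qed simp

lemma distinct_adj_alternating: "distinct_adj (map (\<lambda>i. i mod 2) [0..<r])"
  unfolding distinct_adj_conv_nth by (auto simp del: upt_Suc) presburger

theorem mainTheorem2:
  fixes t s r q :: nat
  assumes "r \<ge> 1"
  shows "(\<forall>u. pos_vec r u \<longrightarrow> card (asym_ball t s u) \<le> A_num t s r) \<and>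
         (\<exists>u. pos_vec r u \<and> card (asym_ball t s u) = A_num t s r) \<and>
         (q \<ge> 2 \<longrightarrow>
           (\<forall>x\<in>J_star q r. card (sticky_ball t s x) \<le> A_num t s r) \<and>
           (\<exists>x\<in>J_star q r. card (sticky_ball t s x) = A_num t s r))"
proof (intro conjI impI)
  have A: "A_num t s r = A_ext t s r"
    using assms by (rule A_num_eq_A_ext)
  show "\<forall>u. pos_vec r u \<longrightarrow> card (asym_ball t s u) \<le> A_num t s r"
    using card_asym_ball_le by (auto simp: A pos_vec_def)
  define u where "u = replicate r (Suc s)"
  have u: "pos_vec r u" "card (asym_ball t s u) = A_num t s r"
    using card_asym_ball_eq[of u s t] by (simp_all add: A u_def pos_vec_def)
  then show "\<exists>u. pos_vec r u \<and> card (asym_ball t s u) = A_num t s r" by blast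
  show "\<forall>x\<in>J_star q r. card (sticky_ball t s x) \<le> A_num t s r"
    using card_sticky_ball_le by (auto simp: A J_star_def)
  assume "q \<ge> 2"
  define cs where "cs = map (\<lambda>i. i mod 2) [0..<r]"
  have cs: "distinct_adj cs" "length cs = length u" "\<forall>x\<in>set u. 1 \<le> x"
    using u(1) distinct_adj_alternating by (simp_all add: cs_def pos_vec_def)
  have "set (runs_string cs u) \<subseteq> {0..<q}"
    using set_runs_string_subset[of cs u] \<open>q \<ge> 2\<close> by (auto simp: cs_def)
  then have "runs_string cs u \<in> J_star q r"
    using remdups_adj_runs_string[OF cs] u(1) by (simp add: J_star_def pos_vec_def cs(2))
  moreover have "card (sticky_ball t s (runs_string cs u)) = A_num t s r"
    using card_sticky_ball_runs_string[OF cs] u(2) by simp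
  ultimately show "\<exists>x\<in>J_star q r. card (sticky_ball t s x) = A_num t s r" by blast
qed

end
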